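(* Let $p,q$ be coprime odd integers with $p>|q|>0$, and let $S(p,q)$ be the corresponding 2-bridge knot. Let $S_0(S(p,q))$ be the subset of the $SL(2,\mathbb{C})$-character variety $X(\pi_1(E_{S(p,q)}))$ consisting of characters $\chi_\rho$ with $\chi_\rho(\mu)=\operatorname{trace}(\rho(\mu))=0$, where $\mu$ is a meridian. Then $S_0(S(p,q))$ is a finite set consisting of exactly the characters of metabelian representations: namely the single character of an abelian (reducible) representation together with the $\frac{p-1}{2}$ distinct characters of irreducible metabelian representations.
   Context: $E_K$ is the exterior of a knot $K$ in $S^3$ and $\pi_1(E_K)$ its knot group. For coprime odd integers $p,q$ with $p>|q|>0$, the 2-bridge knot $S(p,q)$ (Schubert notation) has knot group $\langle x_1,x_2\mid wx_1=x_2w\rangle$ with $w=x_1^{e_1}x_2^{e_2}x_1^{e_3}\cdots x_2^{e_{p-1}}$, $e_i=(-1)^{\lfloor iq/p\rfloor}$, where $x_1,x_2$ are meridians. For a finitely presented group $G$, the $SL(2,\mathbb{C})$-character variety $X(G)$ is the set of characters $\chi_\rho(g)=\operatorname{trace}(\rho(g))$ of representations $\rho:G\to SL(2,\mathbb{C})$ (in the sense of Culler–Shalen), an affine algebraic variety. A representation $\rho$ is metabelian if $\rho([G,G])$ is abelian. *)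

theory Defs
  imports "HOL-Analysis.Analysis"
begin

type_synonym cmat = "complex^2^2"

definition SL2 :: "cmat set" where
  "SL2 = {A. det A = 1}"

text \<open>Inverse of a 2x2 matrix of determinant 1 (the adjugate).\<close>
definition sl2_inv :: "cmat \<Rightarrow> cmat" where
  "sl2_inv A = (\<chi> i j. if i = j then A $ (if i = 1 then 2 else 1) $ (if i = 1 then 2 else 1)
                        else - (A $ i $ j))"

text \<open>Words in the free group on x1, x2: a letter (g, e) denotes x1 if g = False,
  x2 if g = True, raised to the power -1 if e = True and +1 otherwise.\<close>
type_synonym word = "(bool \<times> bool) list"

definition letter_mat :: "cmat \<Rightarrow> cmat \<Rightarrow> bool \<times> bool \<Rightarrow> cmat" where
  "letter_mat X1 X2 l = (let M = (if fst l then X2 else X1) in if snd l then sl2_inv M else M)"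

definition word_eval :: "cmat \<Rightarrow> cmat \<Rightarrow> word \<Rightarrow> cmat" where
  "word_eval X1 X2 u = foldr (\<lambda>l M. letter_mat X1 X2 l ** M) u (mat 1)"

text \<open>The word w = x1^e1 x2^e2 x1^e3 ... x2^e(p-1), e_i = (-1)^floor(iq/p).\<close>
definition rel_word :: "int \<Rightarrow> int \<Rightarrow> word" where
  "rel_word p q = map (\<lambda>i. (even i, odd ((i * q) div p))) [1..p-1]"

text \<open>A representation of the knot group of S(p,q) into SL(2,C) is determined by
  the images X1, X2 of the generators x1, x2, subject to the relation w x1 = x2 w.\<close>
definition is_rep :: "int \<Rightarrow> int \<Rightarrow> cmat \<Rightarrow> cmat \<Rightarrow> bool" where
  "is_rep p q X1 X2 \<longleftrightarrow> X1 \<in> SL2 \<and> X2 \<in> SL2 \<and>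
     word_eval X1 X2 (rel_word p q) ** X1 = X2 ** word_eval X1 X2 (rel_word p q)"

definition rep_image :: "cmat \<Rightarrow> cmat \<Rightarrow> cmat set" where
  "rep_image X1 X2 = range (word_eval X1 X2)"

definition character :: "cmat \<Rightarrow> cmat \<Rightarrow> word \<Rightarrow> complex" where
  "character X1 X2 = (\<lambda>u. trace (word_eval X1 X2 u))"

definition comm :: "cmat \<Rightarrow> cmat \<Rightarrow> cmat" where
  "comm a b = a ** b ** sl2_inv a ** sl2_inv b"

definition abelian_rep :: "cmat \<Rightarrow> cmat \<Rightarrow> bool" where
  "abelian_rep X1 X2 \<longleftrightarrow> (\<forall>a\<in>rep_image X1 X2. \<forall>b\<in>rep_image X1 X2. a ** b = b ** a)"

text \<open>Metabelian: rho([G,G]) = [rho(G), rho(G)] is abelian, i.e. all commutators of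
  elements of rho(G) (which generate it) commute with each other.\<close>
definition metabelian_rep :: "cmat \<Rightarrow> cmat \<Rightarrow> bool" where
  "metabelian_rep X1 X2 \<longleftrightarrow> (\<forall>a\<in>rep_image X1 X2. \<forall>b\<in>rep_image X1 X2.
      \<forall>c\<in>rep_image X1 X2. \<forall>d\<in>rep_image X1 X2. comm a b ** comm c d = comm c d ** comm a b)"

definition irreducible_rep :: "cmat \<Rightarrow> cmat \<Rightarrow> bool" where
  "irreducible_rep X1 X2 \<longleftrightarrow>
     \<not> (\<exists>v::complex^2. v \<noteq> 0 \<and> (\<forall>g\<in>rep_image X1 X2. \<exists>c. g *v v = c *s v))"

definition S0 :: "int \<Rightarrow> int \<Rightarrow> (word \<Rightarrow> complex) set" where
  "S0 p q = {character X1 X2 | X1 X2. is_rep p q X1 X2 \<and> trace X1 = 0}"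

end

(*
  If trace X1 = 0 then also trace X2 = 0, since the meridians x1, x2 are conjugate; hence
  X1^2 = X2^2 = -1 and every word in X1, X2 equals +-B^n or +-B^n X1, where B = X1 X2.
  Consequently a character in S0 is determined by t = trace B. The relator w is alternating
  in x1^(+-1), x2^(+-1), so it evaluates to +-B^((p-1)/2) and the relation w x1 = x2 w becomes
  B^p = -1. Thus t = -(l + 1/l) for a p-th root of unity l, i.e. t = -2 cos (2 pi j / p) with
  0 <= j <= (p-1)/2, and each of these values is attained by the monomial representation
  X1 = [[0, 1], [-1, 0]], X2 = [[0, l], [-1/l, 0]], which is metabelian. For j = 0 it is
  abelian; for j > 0 it is irreducible. Conversely an abelian representation has X1 = X2, so
  t = -2, and an irreducible one has t <> -2: for t = -2 the matrix X1 - X2 is nilpotent and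
  its kernel is a common eigenline.
*)

theory Submission
  imports Defs
begin

section \<open>2x2 complex matrices in coordinates\<close>

definition mat2 :: "complex \<Rightarrow> complex \<Rightarrow> complex \<Rightarrow> complex \<Rightarrow> cmat" where
  "mat2 a b c d = (\<chi> i j. if i = 1 then (if j = 1 then a else b) else (if j = 1 then c else d))"

lemma mat2_nth [simp]:
  "mat2 a b c d $ 1 $ 1 = a" "mat2 a b c d $ 1 $ 2 = b"
  "mat2 a b c d $ 2 $ 1 = c" "mat2 a b c d $ 2 $ 2 = d"
  by (auto simp: mat2_def)

lemma mat2_cases:
  obtains a b c d where "(A::cmat) = mat2 a b c d"
proof
  show "A = mat2 (A$1$1) (A$1$2) (A$2$1) (A$2$2)"
    by (simp add: vec_eq_iff forall_2 mat2_def)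
qed

lemma vec2_eq_iff: "(v::complex^2) = w \<longleftrightarrow> v $ 1 = w $ 1 \<and> v $ 2 = w $ 2"
  by (simp add: vec_eq_iff forall_2)

lemma mat2_eq_iff [simp]:
  "mat2 a b c d = mat2 a' b' c' d' \<longleftrightarrow> a = a' \<and> b = b' \<and> c = c' \<and> d = d'"
  by (auto simp: vec_eq_iff forall_2 mat2_def)

lemma mat2_eq_0_iff [simp]: "mat2 a b c d = 0 \<longleftrightarrow> a = 0 \<and> b = 0 \<and> c = 0 \<and> d = 0"
  by (auto simp: vec_eq_iff forall_2 mat2_def)

lemma mat_eq_mat2: "mat x = mat2 x 0 0 x"
  by (simp add: vec_eq_iff forall_2 mat_def)

lemma mat2_mult [simp]:
  "mat2 a b c d ** mat2 a' b' c' d' =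
     mat2 (a*a' + b*c') (a*b' + b*d') (c*a' + d*c') (c*b' + d*d')"
  by (simp add: vec_eq_iff forall_2 matrix_matrix_mult_def sum_2)

lemma mat2_mult_vec [simp]:
  "mat2 a b c d *v v = (\<chi> i. if i = 1 then a * v$1 + b * v$2 else c * v$1 + d * v$2)"
  by (simp add: vec_eq_iff forall_2 matrix_vector_mult_def sum_2)

lemma mat_mult_vec: "mat x *v (v::complex^2) = x *s v"
  by (simp add: mat_eq_mat2 vec2_eq_iff)

lemma mat2_uminus [simp]: "- mat2 a b c d = mat2 (-a) (-b) (-c) (-d)"
  by (simp add: vec_eq_iff forall_2)

lemma mat2_diff [simp]: "mat2 a b c d - mat2 a' b' c' d' = mat2 (a-a') (b-b') (c-c') (d-d')"
  by (simp add: vec_eq_iff forall_2)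

lemma trace_mat2 [simp]: "trace (mat2 a b c d) = a + d"
  by (simp add: trace_def sum_2)

lemma det_mat2 [simp]: "det (mat2 a b c d) = a * d - b * c"
  by (simp add: det_2)

lemma sl2_inv_mat2 [simp]: "sl2_inv (mat2 a b c d) = mat2 d (-b) (-c) a"
  by (simp add: vec_eq_iff forall_2 sl2_inv_def)

lemma det_sl2_inv [simp]: "det (sl2_inv A) = det (A::cmat)"
  by (cases A rule: mat2_cases) (simp add: algebra_simps)

lemma trace_uminus [simp]: "trace (- A) = - trace (A::cmat)"
  by (cases A rule: mat2_cases) simp

lemma matrix_mul_uminus [simp]:
  "(- A) ** B = - (A ** B)" "A ** (- B) = - (A ** B)" for A B :: cmat
  by (cases A rule: mat2_cases; cases B rule: mat2_cases; simp)+

lemma matrix_vector_mul_uminus: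
  "(- A) *v v = - (A *v v)" "A *v (- v) = - (A *v v)" for A :: cmat
  by (cases A rule: mat2_cases; simp add: vec2_eq_iff algebra_simps)+

lemma matrix_vector_mul_smult: "(A::cmat) *v (c *s v) = c *s (A *v v)"
  by (cases A rule: mat2_cases) (simp add: vec2_eq_iff algebra_simps)

lemma matrix_mul_diff_rdistrib: "(A - B) ** C = A ** C - B ** C" for A B C :: cmat
  by (cases A rule: mat2_cases; cases B rule: mat2_cases; cases C rule: mat2_cases)
    (simp add: algebra_simps)

lemma trace_mat_mult: "trace (mat x ** (A::cmat)) = x * trace A"
  by (cases A rule: mat2_cases) (simp add: mat_eq_mat2 algebra_simps)

lemma matrix_mul_left_cancel:
  fixes A A' M N :: "'a::semiring_1^'n^'n"
  assumes "A' ** A = mat 1"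
  shows "A ** M = A ** N \<longleftrightarrow> M = N"
  by (metis assms matrix_mul_assoc matrix_mul_lid)

lemma sl2_inv_right: "det (A::cmat) = 1 \<Longrightarrow> A ** sl2_inv A = mat 1"
  by (cases A rule: mat2_cases) (simp add: mat_eq_mat2 algebra_simps)

lemma sl2_inv_left: "det (A::cmat) = 1 \<Longrightarrow> sl2_inv A ** A = mat 1"
  by (cases A rule: mat2_cases) (simp add: mat_eq_mat2 algebra_simps)

lemma sl2_inv_commute: "A ** sl2_inv A = sl2_inv A ** A"
  by (cases A rule: mat2_cases) (simp add: algebra_simps)

lemma sl2_cayley_hamilton: "det (A::cmat) = 1 \<Longrightarrow> A ** A = mat (trace A) ** A - mat 1"
  by (cases A rule: mat2_cases) (simp add: mat_eq_mat2 algebra_simps)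

lemma sl2_traceless_square:
  assumes "det (A::cmat) = 1" "trace A = 0"
  shows "A ** A = - mat 1"
proof -
  obtain a b c d where A: "A = mat2 a b c d" by (rule mat2_cases)
  with assms have "d = - a" "a * d - b * c = 1" by (simp_all add: eq_neg_iff_add_eq_0 add.commute)
  then show ?thesis unfolding A by (auto simp: mat_eq_mat2; algebra)
qed

lemma sl2_square_minus_one_traceless:
  assumes "det (A::cmat) = 1" "A ** A = - mat 1"
  shows "trace A = 0"
proof -
  obtain a b c d where A: "A = mat2 a b c d" by (rule mat2_cases)
  with assms have "a * d - b * c = 1" "a * a + b * c = -1" "c * b + d * d = -1"
    by (simp_all add: mat_eq_mat2)
  then have "(a + d)\<^sup>2 = 0"
    by algebra
  then show ?thesis
    unfolding A by simp
qed

lemma sl2_inv_traceless: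
  assumes "trace (A::cmat) = 0"
  shows "sl2_inv A = - A"
proof -
  obtain a b c d where A: "A = mat2 a b c d" by (rule mat2_cases)
  with assms have "d = - a" by (simp add: eq_neg_iff_add_eq_0 add.commute)
  then show ?thesis unfolding A by simp
qed

lemma det_eq_0_kernel:
  fixes A :: "'a::field^'n^'n"
  assumes "det A = 0"
  obtains v where "v \<noteq> 0" "A *v v = 0"
  using assms invertible_det_nz invertible_left_inverse matrix_left_invertible_ker by metis

lemma kernel_line:
  assumes "(N::cmat) \<noteq> 0" "N *v v = 0" "N *v w = 0" "v \<noteq> 0"
  shows "\<exists>c. w = c *s v"
proof -
  obtain a b c d where N: "N = mat2 a b c d" by (rule mat2_cases)
  define D where "D = v$1 * w$2 - v$2 * w$1"
  have "a * v$1 + b * v$2 = 0" "c * v$1 + d * v$2 = 0"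
    "a * w$1 + b * w$2 = 0" "c * w$1 + d * w$2 = 0"
    using assms(2,3) by (simp_all add: N vec2_eq_iff)
  then have "a * D = 0" "b * D = 0" "c * D = 0" "d * D = 0"
    unfolding D_def by algebra+
  moreover have "a \<noteq> 0 \<or> b \<noteq> 0 \<or> c \<noteq> 0 \<or> d \<noteq> 0"
    using assms(1) N by simp
  ultimately have D: "v$1 * w$2 = v$2 * w$1"
    unfolding D_def by auto
  show ?thesis
  proof (cases "v$1 = 0")
    case True
    with assms(4) have "v$2 \<noteq> 0"
      by (simp add: vec2_eq_iff)
    with True D have "w = (w$2 / v$2) *s v"
      by (simp add: vec2_eq_iff)
    then show ?thesis ..
  next
    case False
    with D have "w = (w$1 / v$1) *s v"
      by (simp add: vec2_eq_iff field_simps)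
    then show ?thesis ..
  qed
qed

lemma sl2_traceless_eigenvector:
  assumes "det (A::cmat) = 1" "trace A = 0"
  obtains v where "v \<noteq> 0" "A *v v = \<i> *s v"
proof -
  obtain a b c d where A: "A = mat2 a b c d" by (rule mat2_cases)
  with assms have "d = - a" "a * d - b * c = 1"
    by (simp_all add: eq_neg_iff_add_eq_0 add.commute)
  moreover have "\<i> * \<i> = -1"
    by simp
  ultimately have "(a - \<i>) * (d - \<i>) - b * c = 0"
    by algebra
  then have "det (A - mat \<i>) = 0"
    unfolding A by (simp add: mat_eq_mat2)
  then obtain v where "v \<noteq> 0" "(A - mat \<i>) *v v = 0"
    by (rule det_eq_0_kernel)
  then show ?thesis
    using that by (simp add: matrix_vector_mult_diff_rdistrib mat_mult_vec)
qed

section \<open>Matrix powers\<close>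

fun matpow :: "'a::semiring_1^'n^'n \<Rightarrow> nat \<Rightarrow> 'a^'n^'n" where
  "matpow A 0 = mat 1"
| "matpow A (Suc n) = A ** matpow A n"

lemma matpow_add: "matpow A (m + n) = matpow A m ** matpow A n"
  by (induction m) (simp_all add: matrix_mul_assoc)

lemma matpow_Suc_right: "matpow A (Suc n) = matpow A n ** A"
  using matpow_add[of A n 1] by simp

lemma det_matpow: "det (A::'a::comm_ring_1^'n^'n) = 1 \<Longrightarrow> det (matpow A n) = 1"
  by (induction n) (simp_all add: det_mul det_I)

lemma matpow_intertwine:
  assumes "A ** B = C ** A"
  shows "A ** matpow B n = matpow C n ** A"
proof (induction n)
  case (Suc n)
  have "A ** matpow B (Suc n) = (A ** B) ** matpow B n"
    by (simp add: matrix_mul_assoc)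
  also have "\<dots> = C ** (A ** matpow B n)"
    by (simp add: assms matrix_mul_assoc)
  finally show ?case
    using Suc by (simp add: matrix_mul_assoc)
qed simp

lemma matpow_mult_inverse:
  assumes "A ** B = mat 1"
  shows "matpow A n ** matpow B n = mat 1"
proof (induction n)
  case (Suc n)
  have "matpow A (Suc n) ** matpow B (Suc n) = A ** (matpow A n ** matpow B n) ** B"
    by (metis matpow.simps(2) matpow_Suc_right matrix_mul_assoc)
  with Suc assms show ?case by simp
qed simp

lemma matpow_diag: "matpow (mat2 a 0 0 d) n = mat2 (a ^ n) 0 0 (d ^ n)"
  by (induction n) (simp_all add: mat_eq_mat2)

text \<open>The Lucas sequence \<open>V\<^sub>n(t, 1) = 2 T\<^sub>n(t/2)\<close>.\<close>
fun lucas_V :: "complex \<Rightarrow> nat \<Rightarrow> complex" where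
  "lucas_V t 0 = 2"
| "lucas_V t (Suc 0) = t"
| "lucas_V t (Suc (Suc n)) = t * lucas_V t (Suc n) - lucas_V t n"

lemma trace_matpow:
  assumes "det (A::cmat) = 1"
  shows "trace (matpow A n) = lucas_V (trace A) n"
proof (induction n rule: induct_nat_012)
  case (ge2 n)
  have "matpow A (Suc (Suc n)) = (A ** A) ** matpow A n"
    by (simp add: matrix_mul_assoc)
  also have "\<dots> = mat (trace A) ** matpow A (Suc n) - matpow A n"
    by (simp add: sl2_cayley_hamilton[OF assms] matrix_mul_diff_rdistrib matrix_mul_assoc)
  finally show ?case using ge2 by (simp add: trace_sub trace_mat_mult)
qed (simp_all add: trace_I)

lemma lucas_V_eq_power_sum:
  assumes "m * n = 1"
  shows "lucas_V (m + n) k = m ^ k + n ^ k"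
proof (induction k rule: induct_nat_012)
  case (ge2 k)
  have "lucas_V (m + n) (Suc (Suc k)) = (m + n) * (m * m ^ k + n * n ^ k) - (m ^ k + n ^ k)"
    using ge2 by simp
  also have "\<dots> = m ^ Suc (Suc k) + n ^ Suc (Suc k) + (m * n - 1) * (m ^ k + n ^ k)"
    by (simp add: algebra_simps)
  finally show ?case
    using assms by simp
qed simp_all

lemma sl2_odd_root_of_minus_one_trace:
  assumes "det (A::cmat) = 1" "matpow A P = - mat 1" "odd P"
  shows "\<exists>l. l ^ P = 1 \<and> trace A = - (l + 1 / l)"
proof -
  define t where "t = trace A"
  define m where "m = (t + csqrt (t\<^sup>2 - 4)) / 2"
  define n where "n = (t - csqrt (t\<^sup>2 - 4)) / 2"
  have mn: "m * n = 1" and tmn: "t = m + n"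
    unfolding m_def n_def by (simp_all add: field_simps power2_eq_square) algebra
  have "lucas_V t P = -2"
    using trace_matpow[OF assms(1), of P] assms(2) by (simp add: t_def trace_I)
  then have "m ^ P + n ^ P = -2"
    by (simp add: tmn lucas_V_eq_power_sum[OF mn])
  moreover have "m ^ P * n ^ P = 1"
    using mn by (metis power_mult_distrib power_one)
  moreover have "(x + 1)\<^sup>2 = 0" if "x + y = -2" "x * y = 1" for x y :: complex
    using that by algebra
  ultimately have "(m ^ P + 1)\<^sup>2 = 0"
    by blast
  then have "(- m) ^ P = 1"
    using assms(3) by (simp add: power_minus_odd add_eq_0_iff2)
  moreover have "n = 1 / m"
    using mn by (auto simp: eq_divide_eq mult.commute)
  ultimately show ?thesis
    using tmn unfolding t_def by (intro exI[of _ "- m"]) simp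
qed

section \<open>Roots of unity\<close>

definition unit_root :: "nat \<Rightarrow> nat \<Rightarrow> complex" where
  "unit_root P j = cis (2 * pi * real j / real P)"

definition dihedral_trace :: "nat \<Rightarrow> nat \<Rightarrow> complex" where
  "dihedral_trace P j = - complex_of_real (2 * cos (2 * pi * real j / real P))"

lemma unit_root_0: "unit_root P 0 = 1"
  by (simp add: unit_root_def)

lemma unit_root_nonzero: "unit_root P j \<noteq> 0"
  by (simp add: unit_root_def)

lemma unit_root_power:
  assumes "P > 0"
  shows "unit_root P j ^ P = 1"
proof -
  have "real P * (2 * pi * real j / real P) = 2 * pi * real j"
    using assms by simp
  then have "unit_root P j ^ P = cis (2 * pi * real j)"
    by (simp only: unit_root_def Complex.DeMoivre)
  also have "\<dots> = 1"
    by (rule cis_multiple_2pi) simp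
  finally show ?thesis .
qed

lemma unit_root_trace: "- (unit_root P j + 1 / unit_root P j) = dihedral_trace P j"
  by (simp add: unit_root_def dihedral_trace_def complex_eq_iff divide_inverse cis_inverse)

lemma dihedral_trace_0: "dihedral_trace P 0 = -2"
  by (simp add: dihedral_trace_def)

lemma root_of_unity_trace:
  assumes P: "P = 2 * k + 1" and l: "l ^ P = 1"
  shows "\<exists>j \<le> k. - (l + 1 / l) = dihedral_trace P j"
proof -
  have "P > 0"
    using P by simp
  have "l \<in> {z. z ^ P = 1}"
    using l by simp
  then have "l \<in> (\<lambda>j. cis (2 * pi * real j / real P)) ` {..<P}"
    by (simp only: bij_betw_imp_surj_on[OF Complex.bij_betw_roots_unity[OF \<open>P > 0\<close>]])
  then obtain j where j: "j < P" "l = unit_root P j"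
    unfolding unit_root_def by auto
  show ?thesis
  proof (cases "j \<le> k")
    case True
    then show ?thesis
      using j unit_root_trace by blast
  next
    case False
    have "2 * pi * real (P - j) / real P = 2 * pi - 2 * pi * real j / real P"
      using j P by (simp add: of_nat_diff diff_divide_distrib right_diff_distrib)
    then have "dihedral_trace P (P - j) = dihedral_trace P j"
      by (simp add: dihedral_trace_def)
    moreover have "P - j \<le> k"
      using False P by simp
    ultimately show ?thesis
      using j unit_root_trace by metis
  qed
qed

lemma angle_le_pi:
  assumes "2 * j \<le> P" "0 < P"
  shows "2 * pi * real j / real P \<le> pi"
proof -
  have "pi * (2 * real j) \<le> pi * real P"
    using assms(1) by (intro mult_left_mono) simp_all
  with assms(2) show ?thesis
    by (simp add: divide_le_eq mult.commute mult.left_commute)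
qed

lemma dihedral_trace_inj:
  assumes P: "P = 2 * k + 1"
  shows "inj_on (dihedral_trace P) {..k}"
proof
  fix i j
  assume "i \<in> {..k}" "j \<in> {..k}" and eq: "dihedral_trace P i = dihedral_trace P j"
  then have "2 * i \<le> P" "2 * j \<le> P" "0 < P"
    using P by auto
  then have "2 * pi * real i / real P \<in> {0..pi}" "2 * pi * real j / real P \<in> {0..pi}"
    using angle_le_pi by simp_all
  moreover have "cos (2 * pi * real i / real P) = cos (2 * pi * real j / real P)"
    using eq by (simp add: dihedral_trace_def)
  ultimately have "2 * pi * real i / real P = 2 * pi * real j / real P"
    by (meson atLeastAtMost_iff cos_inj_pi)
  with P show "i = j"
    by simp
qed

lemma dihedral_trace_eq_minus_two_iff:
  assumes "P = 2 * k + 1" "j \<le> k"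
  shows "dihedral_trace P j = -2 \<longleftrightarrow> j = 0"
  using inj_onD[OF dihedral_trace_inj[OF assms(1)], of j 0] assms(2) by (auto simp: dihedral_trace_0)

lemma unit_root_square_ne_one:
  assumes P: "P = 2 * k + 1" and j: "1 \<le> j" "j \<le> k"
  shows "(unit_root P j)\<^sup>2 \<noteq> 1"
proof
  assume "(unit_root P j)\<^sup>2 = 1"
  then consider "unit_root P j = 1" | "unit_root P j = -1"
    using power2_eq_1_iff by blast
  then show False
  proof cases
    case 1
    then have "dihedral_trace P j = -2"
      using unit_root_trace[of P j] by simp
    with P j show False
      using dihedral_trace_eq_minus_two_iff by simp
  next
    case 2
    moreover have "unit_root P j ^ P = 1"
      using P by (intro unit_root_power) simp
    ultimately show False
      using P by simp
  qed
qed

section \<open>Words and representations\<close>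

lemma word_eval_Nil [simp]: "word_eval X1 X2 [] = mat 1"
  by (simp add: word_eval_def)

lemma word_eval_Cons [simp]: "word_eval X1 X2 (l # u) = letter_mat X1 X2 l ** word_eval X1 X2 u"
  by (simp add: word_eval_def)

lemma word_eval_generators:
  "word_eval X1 X2 [(False, False)] = X1" "word_eval X1 X2 [(True, False)] = X2"
  by (simp_all add: letter_mat_def)

lemma generators_in_rep_image: "X1 \<in> rep_image X1 X2" "X2 \<in> rep_image X1 X2"
  unfolding rep_image_def by (metis rangeI word_eval_generators)+

lemma character_generator: "character X1 X2 [(False, False)] = trace X1"
  by (simp add: character_def letter_mat_def)

lemma character_generators_product:
  "character X1 X2 [(False, False), (True, False)] = trace (X1 ** X2)"
  by (simp add: character_def letter_mat_def)

lemma det_word_eval: "det X1 = 1 \<Longrightarrow> det X2 = 1 \<Longrightarrow> det (word_eval X1 X2 u) = 1"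
  by (induction u) (auto simp: det_mul letter_mat_def Let_def)

lemma is_rep_trace_eq:
  assumes "is_rep p q X1 X2"
  shows "trace X2 = trace X1"
proof -
  define W where "W = word_eval X1 X2 (rel_word p q)"
  have "det X1 = 1" "det X2 = 1"
    using assms by (auto simp: is_rep_def SL2_def)
  then have dW: "det W = 1"
    unfolding W_def by (rule det_word_eval)
  have "X2 = W ** X1 ** sl2_inv W"
    using assms sl2_inv_right[OF dW]
    by (simp add: is_rep_def W_def matrix_mul_assoc flip: matrix_mul_assoc[of X2])
  then have "trace X2 = trace (X1 ** (sl2_inv W ** W))"
    by (metis matrix_mul_assoc trace_mul_sym)
  then show ?thesis
    by (simp add: sl2_inv_left[OF dW])
qed

lemma commute_word_eval:
  assumes "\<And>l. a ** letter_mat X1 X2 l = letter_mat X1 X2 l ** a"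
  shows "a ** word_eval X1 X2 u = word_eval X1 X2 u ** a"
proof (induction u)
  case (Cons l u)
  then show ?case
    by (metis assms matrix_mul_assoc word_eval_Cons)
qed simp

lemma abelian_rep_same: "abelian_rep X X"
proof -
  have letters: "letter_mat X X l ** letter_mat X X l' = letter_mat X X l' ** letter_mat X X l" for l l'
    by (auto simp: letter_mat_def Let_def sl2_inv_commute)
  have "letter_mat X X l ** word_eval X X u = word_eval X X u ** letter_mat X X l" for l u
    using letters by (rule commute_word_eval)
  then have "word_eval X X u ** word_eval X X u' = word_eval X X u' ** word_eval X X u" for u u'
    by (metis commute_word_eval)
  then show ?thesis
    unfolding abelian_rep_def rep_image_def by auto
qed

lemma abelian_rep_imp_eq:
  assumes "is_rep p q X1 X2" "abelian_rep X1 X2"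
  shows "X1 = X2"
proof -
  define W where "W = word_eval X1 X2 (rel_word p q)"
  have "det X1 = 1" "det X2 = 1"
    using assms(1) by (auto simp: is_rep_def SL2_def)
  then have dW: "det W = 1"
    unfolding W_def by (rule det_word_eval)
  have "W ** X1 = X1 ** W"
    using assms(2) generators_in_rep_image(1) unfolding abelian_rep_def rep_image_def W_def by blast
  with assms(1) have "X1 ** W = X2 ** W"
    by (simp add: is_rep_def W_def)
  then show ?thesis
    using matrix_mul_left_cancel[of "sl2_inv W" "W" X1 X2] sl2_inv_left[OF dW] sl2_inv_right[OF dW]
    by (metis matrix_mul_assoc matrix_mul_rid)
qed

fun alternating :: "word \<Rightarrow> bool" where
  "alternating [] = True"
| "alternating ((g1, _) # (g2, _) # u) = (\<not> g1 \<and> g2 \<and> alternating u)"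
| "alternating [_] = False"

lemma alternating_upto:
  "odd a \<Longrightarrow> alternating (map (\<lambda>i. (even i, f i)) [a..a + 2 * int m - 1])"
proof (induction m arbitrary: a)
  case (Suc m)
  have "[a..a + 2 * int (Suc m) - 1] = a # (a + 1) # [a + 2..(a + 2) + 2 * int m - 1]"
    by (simp add: upto_rec1 algebra_simps)
  with Suc.IH[of "a + 2"] Suc.prems show ?case
    by simp
qed simp

lemma rel_word_alternating:
  assumes "odd p" "p > 0"
  shows "alternating (rel_word p q)" "length (rel_word p q) = 2 * nat ((p - 1) div 2)"
proof -
  define k where "k = nat ((p - 1) div 2)"
  have k: "p = 2 * int k + 1"
    using assms unfolding k_def by (auto elim!: oddE)
  then have "[1..p - 1] = [1..1 + 2 * int k - 1]"
    by simp
  then show "alternating (rel_word p q)" "length (rel_word p q) = 2 * nat ((p - 1) div 2)"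
    unfolding rel_word_def k_def[symmetric] using alternating_upto[of 1 _ k] k by simp_all
qed

definition signed :: "bool \<Rightarrow> cmat \<Rightarrow> cmat" where
  "signed s M = (if s then - M else M)"

lemma signed_simps [simp]:
  "signed s M ** N = signed s (M ** N)" "M ** signed s N = signed s (M ** N)"
  "signed s (signed s' M) = signed (s \<noteq> s') M" "signed False M = M"
  "trace (signed s M) = (if s then - trace M else trace M)"
  by (auto simp: signed_def)

text \<open>The triple \<open>(s, n, h)\<close> encodes \<open>(-1)^s B^n X^h\<close> with \<open>B = XY\<close> (lemma \<open>word_eval_nf\<close>
  below, for \<open>X\<close>, \<open>Y\<close> traceless). The step is left multiplication by a letter, computed with
  \<open>X B^n = B^-n X\<close>, \<open>Y B^n = -B^(-n-1) X\<close>, \<open>X^2 = -1\<close> and \<open>x^-1 = -x\<close>.\<close>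
fun word_nf_step :: "bool \<times> bool \<Rightarrow> bool \<times> int \<times> bool \<Rightarrow> bool \<times> int \<times> bool" where
  "word_nf_step (g, e) (s, n, h) =
     (if g then (if h then (s \<noteq> e, -n-1, False) else ((\<not>s) \<noteq> e, -n-1, True))
      else (if h then ((\<not>s) \<noteq> e, -n, False) else (s \<noteq> e, -n, True)))"

definition word_nf :: "word \<Rightarrow> bool \<times> int \<times> bool" where
  "word_nf u = foldr word_nf_step u (False, 0, False)"

lemma word_nf_Nil [simp]: "word_nf [] = (False, 0, False)"
  by (simp add: word_nf_def)

lemma word_nf_Cons [simp]: "word_nf (l # u) = word_nf_step l (word_nf u)"
  by (simp add: word_nf_def)

section \<open>Pairs of traceless matrices\<close>

locale traceless_pair =
  fixes X Y :: cmat
  assumes det_X: "det X = 1" and det_Y: "det Y = 1"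
    and trace_X: "trace X = 0" and trace_Y: "trace Y = 0"
begin

definition B :: cmat where "B = X ** Y"

definition C :: cmat where "C = Y ** X"

lemma X_square: "X ** X = - mat 1"
  by (rule sl2_traceless_square[OF det_X trace_X])

lemma Y_square: "Y ** Y = - mat 1"
  by (rule sl2_traceless_square[OF det_Y trace_Y])

lemma letter_mat_eq: "letter_mat X Y (g, e) = signed e (if g then Y else X)"
  by (simp add: letter_mat_def signed_def sl2_inv_traceless trace_X trace_Y)

lemma det_B: "det B = 1"
  by (simp add: B_def det_mul det_X det_Y)

lemma det_C: "det C = 1"
  by (simp add: C_def det_mul det_X det_Y)

lemma trace_C: "trace C = trace B"
  unfolding B_def C_def by (rule trace_mul_sym)

lemma B_C: "B ** C = mat 1"
  by (metis B_def C_def X_square Y_square matrix_mul_assoc matrix_mul_uminus matrix_mul_rid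
      matrix_mul_lid minus_minus)

lemma C_B: "C ** B = mat 1"
  by (metis B_def C_def X_square Y_square matrix_mul_assoc matrix_mul_uminus matrix_mul_rid
      matrix_mul_lid minus_minus)

lemma X_B: "X ** B = - Y"
  by (simp add: B_def X_square matrix_mul_assoc)

lemma X_B_intertwine: "X ** B = C ** X"
  by (simp add: X_B C_def X_square flip: matrix_mul_assoc)

lemma X_C_intertwine: "X ** C = B ** X"
  by (simp add: B_def C_def matrix_mul_assoc)

definition B_zpow :: "int \<Rightarrow> cmat" where
  "B_zpow n = (if 0 \<le> n then matpow B (nat n) else matpow C (nat (- n)))"

lemma B_zpow_0: "B_zpow 0 = mat 1"
  by (simp add: B_zpow_def)

lemma X_B_zpow: "X ** B_zpow n = B_zpow (- n) ** X"
  by (cases "n = 0")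
    (auto simp: B_zpow_def matpow_intertwine X_B_intertwine X_C_intertwine)

lemma B_B_zpow: "B ** B_zpow n = B_zpow (n + 1)"
proof (cases "0 \<le> n")
  case True
  then have "nat (n + 1) = Suc (nat n)"
    by simp
  with True show ?thesis
    by (simp add: B_zpow_def)
next
  case False
  then have "nat (- n) = Suc (nat (- (n + 1)))"
    by simp
  with False show ?thesis
    by (auto simp: B_zpow_def B_C matrix_mul_assoc)
qed

lemma B_zpow_inverse: "B_zpow n ** B_zpow (- n) = mat 1"
  by (cases "n = 0") (auto simp: B_zpow_def matpow_mult_inverse B_C C_B)

lemma det_B_zpow: "det (B_zpow n) = 1"
  by (simp add: B_zpow_def det_matpow det_B det_C)

lemma trace_B_zpow: "trace (B_zpow n) = lucas_V (trace B) (nat \<bar>n\<bar>)"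
  by (simp add: B_zpow_def trace_matpow det_B det_C trace_C)

lemma X_B_zpow_X: "X ** (B_zpow n ** X) = - B_zpow (- n)"
  by (simp add: matrix_mul_assoc X_B_zpow) (simp add: X_square flip: matrix_mul_assoc)

lemma trace_B_zpow_X: "trace (B_zpow n ** X) = 0"
proof (rule sl2_square_minus_one_traceless)
  show "det (B_zpow n ** X) = 1"
    by (simp add: det_mul det_B_zpow det_X)
  show "B_zpow n ** X ** (B_zpow n ** X) = - mat 1"
    by (simp add: X_B_zpow_X B_zpow_inverse flip: matrix_mul_assoc)
qed

lemma Y_B_zpow: "Y ** B_zpow n = - (B_zpow (- n - 1) ** X)"
proof -
  have "Y ** B_zpow n = - ((X ** B) ** B_zpow n)"
    by (simp add: X_B)
  also have "\<dots> = - (X ** (B ** B_zpow n))"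
    by (simp only: matrix_mul_assoc)
  finally show ?thesis
    by (simp add: B_B_zpow X_B_zpow)
qed

lemma Y_B_zpow_X: "Y ** (B_zpow n ** X) = B_zpow (- n - 1)"
  by (simp add: matrix_mul_assoc Y_B_zpow) (simp add: X_square flip: matrix_mul_assoc)

definition nf_eval :: "bool \<times> int \<times> bool \<Rightarrow> cmat" where
  "nf_eval = (\<lambda>(s, n, h). signed s (B_zpow n ** (if h then X else mat 1)))"

lemma word_eval_nf: "word_eval X Y u = nf_eval (word_nf u)"
proof (induction u)
  case Nil
  then show ?case
    by (simp add: nf_eval_def B_zpow_0)
next
  case (Cons l u)
  obtain g e where l: "l = (g, e)"
    by (cases l)
  obtain s n h where nf: "word_nf u = (s, n, h)"
    by (cases "word_nf u")
  have "word_eval X Y u = signed s (B_zpow n ** (if h then X else mat 1))"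
    using Cons nf by (simp add: nf_eval_def)
  then show ?case
    using nf by (cases g; cases h; cases e; cases s)
      (simp_all add: l letter_mat_eq nf_eval_def signed_def X_B_zpow_X Y_B_zpow Y_B_zpow_X X_B_zpow)
qed

lemma trace_word_eval:
  "trace (word_eval X Y u) = (case word_nf u of (s, n, h) \<Rightarrow>
     if h then 0 else if s then - lucas_V (trace (X ** Y)) (nat \<bar>n\<bar>)
     else lucas_V (trace (X ** Y)) (nat \<bar>n\<bar>))"
  by (simp add: word_eval_nf nf_eval_def trace_B_zpow_X trace_B_zpow B_def split: prod.split)

lemma word_eval_alternating:
  "alternating u \<Longrightarrow> \<exists>s. word_eval X Y u = signed s (matpow B (length u div 2))"
proof (induction u rule: alternating.induct)
  case (2 g1 a g2 b u)
  then obtain s where "word_eval X Y u = signed s (matpow B (length u div 2))"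
    by auto
  with 2 have "word_eval X Y ((g1, a) # (g2, b) # u) =
      signed (a \<noteq> (b \<noteq> s)) (matpow B (Suc (length u div 2)))"
    by (cases a; cases b; cases s) (simp_all add: letter_mat_eq B_def matrix_mul_assoc)
  then show ?case
    by auto
qed (auto intro: exI[of _ False])

lemma is_rep_iff_matpow:
  assumes "odd p" "p > 0"
  shows "is_rep p q X Y \<longleftrightarrow> matpow B (nat p) = - mat 1"
proof -
  define k where "k = nat ((p - 1) div 2)"
  have p: "nat p = Suc (k + k)"
    using assms unfolding k_def by (auto elim!: oddE)
  obtain s where s: "word_eval X Y (rel_word p q) = signed s (matpow B k)"
    using word_eval_alternating rel_word_alternating[OF assms, of q] unfolding k_def by force
  have X_inverse: "(- X) ** X = mat 1"
    by (simp add: X_square)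
  have XBX: "X ** (matpow B k ** X) = - matpow C k"
    by (simp add: matrix_mul_assoc matpow_intertwine[OF X_B_intertwine])
      (simp add: X_square flip: matrix_mul_assoc)
  have BBk: "matpow B k ** matpow B (Suc k) = matpow B (nat p)"
    unfolding p matpow_add[symmetric] by simp
  have XYB: "X ** (Y ** matpow B k) = matpow B (Suc k)"
    by (simp add: B_def matrix_mul_assoc)
  have "is_rep p q X Y \<longleftrightarrow> matpow B k ** X = Y ** matpow B k"
    using det_X det_Y by (cases s) (auto simp: is_rep_def SL2_def s signed_def)
  also have "\<dots> \<longleftrightarrow> X ** (matpow B k ** X) = X ** (Y ** matpow B k)"
    using matrix_mul_left_cancel[OF X_inverse] by blast
  also have "\<dots> \<longleftrightarrow> - matpow C k = matpow B (Suc k)"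
    by (simp only: XBX XYB)
  also have "\<dots> \<longleftrightarrow> matpow B k ** (- matpow C k) = matpow B k ** matpow B (Suc k)"
    using matrix_mul_left_cancel[OF matpow_mult_inverse[OF C_B]] by blast
  also have "\<dots> \<longleftrightarrow> matpow B (nat p) = - mat 1"
    unfolding BBk by (auto simp: matpow_mult_inverse[OF B_C])
  finally show ?thesis .
qed

lemma X_minus_Y_nilpotent:
  assumes "trace B = -2"
  shows "(X - Y) ** (X - Y) = 0" "X ** (X - Y) = - ((X - Y) ** X)"
proof -
  obtain a b c d where X: "X = mat2 a b c d" by (rule mat2_cases)
  obtain e f g h where Y: "Y = mat2 e f g h" by (rule mat2_cases)
  have "a + d = 0" "e + h = 0" "a * d - b * c = 1" "e * h - f * g = 1"
    "a * e + b * g + (c * f + d * h) = -2"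
    using det_X det_Y trace_X trace_Y assms[unfolded B_def] by (simp_all add: X Y)
  then show "(X - Y) ** (X - Y) = 0" "X ** (X - Y) = - ((X - Y) ** X)"
    unfolding X Y by (simp; intro conjI; algebra)+
qed

lemma common_eigenvector:
  assumes "trace B = -2"
  obtains v a b where "v \<noteq> 0" "X *v v = a *s v" "Y *v v = b *s v"
proof (cases "X = Y")
  case True
  obtain v where "v \<noteq> 0" "X *v v = \<i> *s v"
    using sl2_traceless_eigenvector[OF det_X trace_X] .
  with True that show ?thesis
    by blast
next
  case False
  define N where "N = X - Y"
  have N: "N \<noteq> 0" "N ** N = 0" "X ** N = - (N ** X)"
    using False X_minus_Y_nilpotent[OF assms] unfolding N_def by simp_all
  then have "det N * det N = 0"
    using det_mul[of N N] by (simp add: det_2)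
  then have "det N = 0"
    by simp
  then obtain v where v: "v \<noteq> 0" "N *v v = 0"
    by (rule det_eq_0_kernel)
  have "N *v (X *v v) = - (X *v (N *v v))"
    by (simp add: matrix_vector_mul_assoc N(3) matrix_vector_mul_uminus)
  then obtain a where a: "X *v v = a *s v"
    using kernel_line[OF N(1) v(2) _ v(1)] v(2) by auto
  have "Y *v v = X *v v - N *v v"
    by (simp add: N_def matrix_vector_mult_diff_rdistrib)
  with a v that show ?thesis
    by simp
qed

lemma word_eval_common_eigenvector:
  assumes "X *v v = a *s v" "Y *v v = b *s v"
  shows "\<exists>c. word_eval X Y u *v v = c *s v"
proof (induction u)
  case Nil
  show ?case
    by (rule exI[of _ 1]) simp
next
  case (Cons l u)
  then obtain c where c: "word_eval X Y u *v v = c *s v"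
    by blast
  obtain g e where l: "l = (g, e)"
    by (cases l)
  obtain x where x: "(if g then Y else X) *v v = x *s v"
    using assms by (cases g) auto
  have "word_eval X Y (l # u) *v v = signed e (if g then Y else X) *v (word_eval X Y u *v v)"
    by (simp add: l letter_mat_eq matrix_vector_mul_assoc del: signed_simps)
  also have "\<dots> = c *s (signed e (if g then Y else X) *v v)"
    by (simp add: c matrix_vector_mul_smult)
  also have "\<dots> = (c * (if e then - x else x)) *s v"
    using x by (simp add: signed_def matrix_vector_mul_uminus)
  finally show ?case
    by blast
qed

lemma irreducible_trace_ne:
  assumes "irreducible_rep X Y"
  shows "trace B \<noteq> -2"
proof
  assume "trace B = -2"
  then obtain v a b where "v \<noteq> 0" "X *v v = a *s v" "Y *v v = b *s v"
    by (rule common_eigenvector)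
  with assms word_eval_common_eigenvector show False
    unfolding irreducible_rep_def rep_image_def by blast
qed

end

lemma traceless_character_eq:
  assumes "traceless_pair X Y" "traceless_pair X' Y'" "trace (X ** Y) = trace (X' ** Y')"
  shows "character X Y = character X' Y'"
proof
  fix u
  show "character X Y u = character X' Y' u"
    unfolding character_def traceless_pair.trace_word_eval[OF assms(1)]
      traceless_pair.trace_word_eval[OF assms(2)] assms(3) ..
qed

lemma is_rep_traceless_pair:
  assumes "is_rep p q X1 X2" "trace X1 = 0"
  shows "traceless_pair X1 X2"
  using assms is_rep_trace_eq[OF assms(1)] by unfold_locales (auto simp: is_rep_def SL2_def)

section \<open>Monomial representations\<close>

definition monomial :: "cmat \<Rightarrow> bool" where
  "monomial M \<longleftrightarrow> (\<exists>a d. M = mat2 a 0 0 d) \<or> (\<exists>b c. M = mat2 0 b c 0)"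

lemma monomial_mult: "monomial A \<Longrightarrow> monomial B \<Longrightarrow> monomial (A ** B)"
  unfolding monomial_def by auto

lemma monomial_sl2_inv: "monomial A \<Longrightarrow> monomial (sl2_inv A)"
  unfolding monomial_def by auto

lemma monomial_word_eval: "monomial X1 \<Longrightarrow> monomial X2 \<Longrightarrow> monomial (word_eval X1 X2 u)"
proof (induction u)
  case Nil
  then show ?case
    by (auto simp: monomial_def mat_eq_mat2)
next
  case (Cons l u)
  then show ?case
    by (simp add: monomial_mult monomial_sl2_inv letter_mat_def Let_def)
qed

text \<open>Monomial matrices map onto \<open>{diagonal, anti-diagonal} \<cong> \<int>/2\<close>, so their commutators
  are diagonal and commute.\<close>
lemma comm_monomial_diagonal: "monomial a \<Longrightarrow> monomial b \<Longrightarrow> \<exists>x y. comm a b = mat2 x 0 0 y"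
  unfolding monomial_def comm_def by (elim disjE exE) auto

lemma metabelian_rep_monomial:
  assumes "monomial X1" "monomial X2"
  shows "metabelian_rep X1 X2"
proof -
  have "comm a b ** comm c d = comm c d ** comm a b"
    if "monomial a" "monomial b" "monomial c" "monomial d" for a b c d
    using comm_monomial_diagonal[OF that(1,2)] comm_monomial_diagonal[OF that(3,4)]
    by (auto simp: mult.commute)
  then show ?thesis
    unfolding metabelian_rep_def rep_image_def using monomial_word_eval[OF assms] by auto
qed

definition X0 :: cmat where
  "X0 = mat2 0 1 (-1) 0"

definition Y0 :: "complex \<Rightarrow> cmat" where
  "Y0 l = mat2 0 l (- 1 / l) 0"

lemma Y0_1: "Y0 1 = X0"
  by (simp add: X0_def Y0_def)

lemma traceless_pair_X0_Y0: "l \<noteq> 0 \<Longrightarrow> traceless_pair X0 (Y0 l)"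
  by unfold_locales (simp_all add: X0_def Y0_def)

lemma trace_X0_Y0: "trace (X0 ** Y0 l) = - (l + 1 / l)"
  by (simp add: X0_def Y0_def)

lemma is_rep_X0_Y0:
  assumes "odd p" "p > 0" "l ^ nat p = 1"
  shows "is_rep p q X0 (Y0 l)"
proof -
  have "l \<noteq> 0"
  proof
    assume "l = 0"
    with assms(2,3) show False
      by (simp add: power_0_left)
  qed
  then interpret traceless_pair X0 "Y0 l"
    by (rule traceless_pair_X0_Y0)
  have "B = mat2 (- (1 / l)) 0 0 (- l)"
    unfolding B_def by (simp add: X0_def Y0_def)
  then have "matpow B (nat p) = mat2 ((- (1 / l)) ^ nat p) 0 0 ((- l) ^ nat p)"
    by (simp add: matpow_diag)
  also have "\<dots> = - mat 1"
    using assms by (simp add: power_minus_odd even_nat_iff power_one_over mat_eq_mat2)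
  finally show ?thesis
    using is_rep_iff_matpow[OF assms(1,2)] by simp
qed

lemma metabelian_rep_X0_Y0: "metabelian_rep X0 (Y0 l)"
  by (rule metabelian_rep_monomial) (auto simp: monomial_def X0_def Y0_def)

lemma irreducible_rep_X0_Y0:
  assumes "l \<noteq> 0" "l\<^sup>2 \<noteq> 1"
  shows "irreducible_rep X0 (Y0 l)"
  unfolding irreducible_rep_def
proof
  assume "\<exists>v. v \<noteq> 0 \<and> (\<forall>g\<in>rep_image X0 (Y0 l). \<exists>c. g *v v = c *s v)"
  then obtain v c d where v: "v \<noteq> 0" "X0 *v v = c *s v" "Y0 l *v v = d *s v"
    using generators_in_rep_image by meson
  define a b where "a = v$1" and "b = v$2"
  have "b = c * a" "- a = c * b" "l * b = d * a" "- (1 / l) * a = d * b"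
    using v(2,3) unfolding a_def b_def by (simp_all add: X0_def Y0_def vec2_eq_iff)
  moreover have "l * (1 / l) = 1"
    using assms(1) by simp
  ultimately have "b * b * (l * l - 1) = 0"
    by algebra
  moreover have "b \<noteq> 0"
  proof
    assume "b = 0"
    with \<open>- a = c * b\<close> have "v = 0"
      unfolding a_def b_def by (simp add: vec2_eq_iff)
    with v(1) show False
      by simp
  qed
  ultimately show False
    using assms(2) by (simp add: power2_eq_square)
qed

section \<open>Characters with vanishing meridian trace\<close>

definition dihedral_char :: "int \<Rightarrow> nat \<Rightarrow> word \<Rightarrow> complex" where
  "dihedral_char p j = character X0 (Y0 (unit_root (nat p) j))"

lemma nat_odd_pos: "odd p \<Longrightarrow> p > 0 \<Longrightarrow> nat p = 2 * nat ((p - 1) div 2) + 1"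
  by (auto elim!: oddE)

lemma traceless_pair_dihedral: "traceless_pair X0 (Y0 (unit_root P j))"
  by (rule traceless_pair_X0_Y0[OF unit_root_nonzero])

lemma trace_dihedral: "trace (X0 ** Y0 (unit_root P j)) = dihedral_trace P j"
  by (simp only: trace_X0_Y0 unit_root_trace)

lemma is_rep_dihedral: "odd p \<Longrightarrow> p > 0 \<Longrightarrow> is_rep p q X0 (Y0 (unit_root (nat p) j))"
  by (simp add: is_rep_X0_Y0 unit_root_power)

lemma dihedral_char_in_S0: "odd p \<Longrightarrow> p > 0 \<Longrightarrow> dihedral_char p j \<in> S0 p q"
  unfolding S0_def dihedral_char_def using is_rep_dihedral by (fastforce simp: X0_def)

lemma S0_trace_generator:
  assumes "character X1 X2 \<in> S0 p q"
  shows "trace X1 = 0"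
proof -
  obtain X1' X2' where "character X1 X2 = character X1' X2'" "trace X1' = 0"
    using assms unfolding S0_def by blast
  then show ?thesis
    by (metis character_generator)
qed

lemma S0_character_eq_dihedral_char:
  assumes "odd p" "p > 0" "is_rep p q X1 X2" "trace X1 = 0"
  obtains j where "j \<le> nat ((p - 1) div 2)" "trace (X1 ** X2) = dihedral_trace (nat p) j"
    "character X1 X2 = dihedral_char p j"
proof -
  interpret traceless_pair X1 X2
    using is_rep_traceless_pair[OF assms(3,4)] .
  have "matpow B (nat p) = - mat 1"
    using is_rep_iff_matpow[OF assms(1,2)] assms(3) by blast
  moreover have "odd (nat p)"
    using nat_odd_pos[OF assms(1,2)] by simp
  ultimately obtain l where "l ^ nat p = 1" "trace B = - (l + 1 / l)"
    using sl2_odd_root_of_minus_one_trace[OF det_B] by blast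
  then obtain j where j: "j \<le> nat ((p - 1) div 2)" "trace (X1 ** X2) = dihedral_trace (nat p) j"
    using root_of_unity_trace[OF nat_odd_pos[OF assms(1,2)]] unfolding B_def by metis
  moreover have "character X1 X2 = dihedral_char p j"
    unfolding dihedral_char_def using traceless_pair_axioms traceless_pair_dihedral j(2)
    by (intro traceless_character_eq) (simp_all add: trace_dihedral)
  ultimately show ?thesis
    using that by blast
qed

lemma S0_eq_dihedral_chars:
  assumes "odd p" "p > 0"
  shows "S0 p q = dihedral_char p ` {..nat ((p - 1) div 2)}"
proof
  show "S0 p q \<subseteq> dihedral_char p ` {..nat ((p - 1) div 2)}"
    unfolding S0_def using S0_character_eq_dihedral_char[OF assms] by (auto, metis atMost_iff image_eqI)
  show "dihedral_char p ` {..nat ((p - 1) div 2)} \<subseteq> S0 p q"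
    using dihedral_char_in_S0[OF assms] by auto
qed

lemma inj_on_dihedral_char:
  assumes "odd p" "p > 0"
  shows "inj_on (dihedral_char p) {..nat ((p - 1) div 2)}"
proof (rule inj_on_imageI2)
  have "(\<lambda>j. dihedral_char p j [(False, False), (True, False)]) = dihedral_trace (nat p)"
    unfolding dihedral_char_def character_generators_product trace_dihedral ..
  then show "inj_on ((\<lambda>ch. ch [(False, False), (True, False)]) \<circ> dihedral_char p) {..nat ((p - 1) div 2)}"
    using dihedral_trace_inj[OF nat_odd_pos[OF assms]] by (simp add: comp_def)
qed

lemma abelian_chars_eq:
  assumes "odd p" "p > 0"
  shows "{ch \<in> S0 p q. \<exists>X1 X2. is_rep p q X1 X2 \<and> abelian_rep X1 X2 \<and> ch = character X1 X2}
    = {dihedral_char p 0}" (is "?A = _")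
proof
  show "?A \<subseteq> {dihedral_char p 0}"
  proof
    fix ch
    assume "ch \<in> ?A"
    then obtain X1 X2 where rep: "is_rep p q X1 X2" "abelian_rep X1 X2" and
      ch: "ch = character X1 X2" "ch \<in> S0 p q"
      by blast
    then have "trace X1 = 0"
      using S0_trace_generator by blast
    moreover have "X1 = X2"
      using abelian_rep_imp_eq[OF rep] .
    ultimately obtain j where j: "j \<le> nat ((p - 1) div 2)"
      "trace (X1 ** X1) = dihedral_trace (nat p) j" "ch = dihedral_char p j"
      using S0_character_eq_dihedral_char[OF assms] rep ch by metis
    have "X1 ** X1 = - mat 1"
      using sl2_traceless_square rep(1) \<open>trace X1 = 0\<close> by (simp add: is_rep_def SL2_def)
    then have "j = 0"
      using j(1,2) dihedral_trace_eq_minus_two_iff[OF nat_odd_pos[OF assms]] by (simp add: trace_I)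
    with j(3) show "ch \<in> {dihedral_char p 0}"
      by simp
  qed
  have "dihedral_char p 0 = character X0 X0" "is_rep p q X0 X0"
    using is_rep_dihedral[OF assms, where j = 0] by (simp_all add: dihedral_char_def unit_root_0 Y0_1)
  then show "{dihedral_char p 0} \<subseteq> ?A"
    using dihedral_char_in_S0[OF assms] abelian_rep_same by blast
qed

lemma irreducible_metabelian_chars_eq:
  assumes "odd p" "p > 0"
  shows "{ch \<in> S0 p q. \<exists>X1 X2. is_rep p q X1 X2 \<and> irreducible_rep X1 X2
      \<and> metabelian_rep X1 X2 \<and> ch = character X1 X2}
    = dihedral_char p ` {1..nat ((p - 1) div 2)}" (is "?I = _")
proof
  show "?I \<subseteq> dihedral_char p ` {1..nat ((p - 1) div 2)}"
  proof
    fix ch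
    assume "ch \<in> ?I"
    then obtain X1 X2 where rep: "is_rep p q X1 X2" "irreducible_rep X1 X2" and
      ch: "ch = character X1 X2" "ch \<in> S0 p q"
      by blast
    then have "trace X1 = 0"
      using S0_trace_generator by blast
    then obtain j where j: "j \<le> nat ((p - 1) div 2)"
      "trace (X1 ** X2) = dihedral_trace (nat p) j" "ch = dihedral_char p j"
      using S0_character_eq_dihedral_char[OF assms] rep ch by metis
    interpret traceless_pair X1 X2
      using is_rep_traceless_pair[OF rep(1) \<open>trace X1 = 0\<close>] .
    have "j \<noteq> 0"
      using irreducible_trace_ne[OF rep(2)] j(2) unfolding B_def by (metis dihedral_trace_0)
    with j show "ch \<in> dihedral_char p ` {1..nat ((p - 1) div 2)}"
      by auto
  qed
  show "dihedral_char p ` {1..nat ((p - 1) div 2)} \<subseteq> ?I"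
  proof
    fix ch
    assume "ch \<in> dihedral_char p ` {1..nat ((p - 1) div 2)}"
    then obtain j where j: "1 \<le> j" "j \<le> nat ((p - 1) div 2)" "ch = dihedral_char p j"
      by auto
    have "irreducible_rep X0 (Y0 (unit_root (nat p) j))"
      using irreducible_rep_X0_Y0 unit_root_nonzero
        unit_root_square_ne_one[OF nat_odd_pos[OF assms] j(1,2)] by blast
    then show "ch \<in> ?I"
      using j(3) dihedral_char_in_S0[OF assms] is_rep_dihedral[OF assms] metabelian_rep_X0_Y0
      unfolding dihedral_char_def by blast
  qed
qed

theorem mainTheorem3:
  fixes p q :: int
  assumes "odd p" and "odd q" and "coprime p q" and "p > \<bar>q\<bar>" and "\<bar>q\<bar> > 0"
  shows "finite (S0 p q)
    \<and> card {ch \<in> S0 p q. \<exists>X1 X2. is_rep p q X1 X2 \<and> abelian_rep X1 X2 \<and> ch = character X1 X2} = 1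
    \<and> card {ch \<in> S0 p q. \<exists>X1 X2. is_rep p q X1 X2 \<and> irreducible_rep X1 X2
              \<and> metabelian_rep X1 X2 \<and> ch = character X1 X2} = nat ((p - 1) div 2)
    \<and> S0 p q = {ch \<in> S0 p q. \<exists>X1 X2. is_rep p q X1 X2 \<and> abelian_rep X1 X2 \<and> ch = character X1 X2}
               \<union> {ch \<in> S0 p q. \<exists>X1 X2. is_rep p q X1 X2 \<and> irreducible_rep X1 X2
                   \<and> metabelian_rep X1 X2 \<and> ch = character X1 X2}
    \<and> card (S0 p q) = nat ((p - 1) div 2) + 1"
proof -
  \<comment> \<open>Once \<open>trace X1 = 0\<close>, the relator collapses to \<open>(X1 X2)\<^sup>p = -1\<close> whatever \<open>q\<close> is,
    so only \<open>p\<close> odd and positive is used.\<close>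
  have p: "odd p" "p > 0"
    using assms(1,4,5) by auto
  define k where "k = nat ((p - 1) div 2)"
  have inj: "inj_on (dihedral_char p) {..k}"
    unfolding k_def by (rule inj_on_dihedral_char[OF p])
  have "{..k} = insert 0 {1..k}"
    by auto
  with inj have "card (dihedral_char p ` {1..k}) = k" "dihedral_char p 0 \<notin> dihedral_char p ` {1..k}"
    by (auto simp: card_image inj_on_subset inj_on_image_mem_iff[OF inj])
  then show ?thesis
    using S0_eq_dihedral_chars[OF p] abelian_chars_eq[OF p] irreducible_metabelian_chars_eq[OF p]
      card_image[OF inj] \<open>{..k} = insert 0 {1..k}\<close>
    unfolding k_def[symmetric] by auto
qed

end
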